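(* Let $\psi(x)=6x^5-15x^4+10x^3$ and, for $n\in\mathbb{N}$, $f_n(x)=\psi\big(0\vee(|x|-(n-1))\wedge1\big)$. For each $n\in\mathbb{N}^*$, $f_n$ is $C^2$, even, non-decreasing on $\mathbb{R}_+$, equal to $0$ on $[-(n-1),n-1]$ and to $1$ on $(-n,n)^c$; moreover $f_0\equiv1$. Furthermore, for $\alpha\in(0,2)$, $$\sup_{n\in\mathbb{N}^*,x\in\mathbb{R}}|D^\alpha f_n(x)|<+\infty,$$ and for each $n\in\mathbb{N}^*$ and $x\in(-n+1,n-1)$, $|D^\alpha f_n(x)|\le\frac{2}{\alpha(n-1-|x|)^\alpha}$. Finally, if $\eta>0$, $X(x)$ ($x\in\mathbb{R}$) are symmetric real random variables and $\sigma:\mathbb{R}\to\mathbb{R}_+$ is bounded with $\lim_{u\to\infty}\sup_x|u^\alpha\mathbb{P}(|X(x)|\ge u)-2\sigma(x)/\alpha|=0$, and $M_K(x,dh)$ is the law of $X(x)/K^{\eta/\alpha}$, then $$\lim_{K\to\infty}K^\eta\int_\mathbb{R}(f_n(x+h)-f_n(x))M_K(x,dh)=\sigma(x)D^\alpha f_n(x)$$ uniformly in $n\in\mathbb{N}^*$ and $x\in\mathbb{R}$.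
   Context: $D^\alpha f(x)=\int_\mathbb{R}(f(x+h)-f(x)-f'(x)h\mathbf{1}_{\{|h|\le1\}})\frac{dh}{|h|^{1+\alpha}}$ denotes the fractional Laplacian of order $\alpha\in(0,2)$. *)

theory Defs
  imports "HOL-Probability.Probability"
begin

definition psi :: "real \<Rightarrow> real" where
  "psi x = 6 * x ^ 5 - 15 * x ^ 4 + 10 * x ^ 3"

definition fn :: "nat \<Rightarrow> real \<Rightarrow> real" where
  "fn n x = psi (min (max 0 (\<bar>x\<bar> - (real n - 1))) 1)"

definition frac_lap :: "real \<Rightarrow> (real \<Rightarrow> real) \<Rightarrow> real \<Rightarrow> real" where
  "frac_lap \<alpha> f x = (LINT h|lborel.
      (f (x + h) - f x - deriv f x * h * indicator {-1..1} h) / \<bar>h\<bar> powr (1 + \<alpha>))"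

definition C2 :: "(real \<Rightarrow> real) \<Rightarrow> bool" where
  "C2 f \<longleftrightarrow> (\<forall>x. f differentiable at x) \<and> (\<forall>x. deriv f differentiable at x)
     \<and> continuous_on UNIV (deriv (deriv f))"

end

theory Submission
  imports Defs
begin

text \<open>
  For \<open>n \<ge> 1\<close>, \<open>fn n\<close> is a sum of two \<open>C\<^sup>2\<close> ramps \<open>psi \<circ> clamp01\<close>, so its second derivative is
  bounded by \<open>120\<close> and its derivative lives on the two unit intervals \<open>n - 1 \<le> |y| \<le> n\<close>.
  Symmetrising in \<open>h\<close>, the integrand of \<open>frac_lap \<alpha> f x\<close> becomes \<open>G h / |h| powr (1 + \<alpha>)\<close>, where
  \<open>G h = (f (x + h) + f (x - h)) / 2 - f x\<close> is the integral of \<open>D s = (f' (x + s) - f' (x - s)) / 2\<close>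
  over \<open>0 < s \<le> |h|\<close>. Fubini turns \<open>frac_lap \<alpha> f x\<close> into the integral over \<open>s > 0\<close> of
  \<open>D s\<close> times the kernel tail \<open>2 s powr (- \<alpha>) / \<alpha>\<close>, and the same computation for a symmetric law
  \<open>\<nu>\<close> replaces that tail by \<open>\<nu> {h. s \<le> |h|}\<close>. Since \<open>|D s|\<close> is at most \<open>120 s\<close> and at most a
  function of total mass \<open>60\<close>, both independently of \<open>n\<close> and \<open>x\<close>, all bounds are uniform. For the law
  of \<open>X x / c\<close> with \<open>c = K powr (\<eta> / \<alpha>)\<close>, the tail \<open>c powr \<alpha> * \<nu> {h. s \<le> |h|}\<close> is close to
  \<open>2 \<sigma> x s powr (- \<alpha>) / \<alpha>\<close> once \<open>s c\<close> is large, and the remaining region \<open>s < U / c\<close> contributes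
  \<open>O ((U / c) powr (2 - \<alpha>))\<close>, which yields the uniform convergence.
\<close>

subsection \<open>Smooth ramps\<close>

definition clamp01 :: "real \<Rightarrow> real" where
  "clamp01 y = min (max 0 y) 1"

lemma clamp01_eq_0: "y \<le> 0 \<Longrightarrow> clamp01 y = 0"
  and clamp01_eq_1: "1 \<le> y \<Longrightarrow> clamp01 y = 1"
  and clamp01_eq_id: "0 \<le> y \<Longrightarrow> y \<le> 1 \<Longrightarrow> clamp01 y = y"
  and clamp01_bounds: "0 \<le> clamp01 y" "clamp01 y \<le> 1"
  by (simp_all add: clamp01_def)

lemma continuous_on_clamp01: "continuous_on UNIV clamp01"
  unfolding clamp01_def by (intro continuous_intros)

lemma has_real_derivative_split_at:
  assumes "(f has_real_derivative D) (at x within {..x})"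
    and "(f has_real_derivative D) (at x within {x..})"
  shows "(f has_real_derivative D) (at x)"
proof -
  have "(f has_real_derivative D) (at_left x)" "(f has_real_derivative D) (at_right x)"
    by (rule DERIV_subset[OF assms(1)], force, rule DERIV_subset[OF assms(2)], force)
  then show ?thesis
    unfolding has_field_derivative_iff by (intro filterlim_split_at)
qed

text \<open>At the two corners of the clamp the one-sided derivatives are glued; they agree because
  \<open>P'\<close> vanishes at \<open>0\<close> and \<open>1\<close>.\<close>
lemma has_real_derivative_comp_clamp01:
  assumes P: "\<And>t. (P has_real_derivative P' t) (at t)" and P'0: "P' 0 = 0" and P'1: "P' 1 = 0"
  shows "((\<lambda>y. P (clamp01 y)) has_real_derivative P' (clamp01 y)) (at y)"
proof -
  let ?F = "\<lambda>y. P (clamp01 y)"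
  have const: "(?F has_real_derivative 0) (at y within S)"
    if "y \<in> S" "\<And>z. z \<in> S \<Longrightarrow> clamp01 z = c" for S c
    by (rule has_field_derivative_transform_within[where f="\<lambda>_. P c" and d=1]) (use that in auto)
  have inner: "(?F has_real_derivative P' y) (at y within S)"
    if "y \<in> S" "\<And>z. z \<in> S \<Longrightarrow> dist z y < 1 \<Longrightarrow> 0 \<le> z \<and> z \<le> 1" for S
    by (rule has_field_derivative_transform_within[OF has_field_derivative_at_within[OF P], of 1])
       (use that in \<open>auto simp: clamp01_eq_id\<close>)
  consider "y < 0" | "y = 0" | "0 < y \<and> y < 1" | "y = 1" | "1 < y" by linarith
  then show ?thesis
  proof cases
    case 1
    have "(?F has_real_derivative 0) (at y)"
      by (rule has_field_derivative_transform_within_open[where f="\<lambda>_. P 0" and S="{..<0}"])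
         (use 1 in \<open>auto simp: clamp01_eq_0\<close>)
    then show ?thesis using 1 P'0 by (simp add: clamp01_eq_0)
  next
    case 2
    have "(?F has_real_derivative 0) (at y within {..y})"
      using 2 by (intro const[where c=0]) (auto simp: clamp01_eq_0)
    moreover have "(?F has_real_derivative 0) (at y within {y..})"
      using inner[of "{y..}"] 2 P'0 by (simp add: dist_real_def)
    ultimately show ?thesis using 2 P'0 by (simp add: clamp01_eq_0 has_real_derivative_split_at)
  next
    case 3
    have "(?F has_real_derivative P' y) (at y)"
      by (rule has_field_derivative_transform_within_open[where f=P and S="{0<..<1}"])
         (use 3 P in \<open>auto simp: clamp01_eq_id\<close>)
    then show ?thesis using 3 by (simp add: clamp01_eq_id)
  next
    case 4
    have "(?F has_real_derivative 0) (at y within {..y})"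
      using inner[of "{..y}"] 4 P'1 by (simp add: dist_real_def)
    moreover have "(?F has_real_derivative 0) (at y within {y..})"
      using 4 by (intro const[where c=1]) (auto simp: clamp01_eq_1)
    ultimately show ?thesis using 4 P'1 by (simp add: clamp01_eq_1 has_real_derivative_split_at)
  next
    case 5
    have "(?F has_real_derivative 0) (at y)"
      by (rule has_field_derivative_transform_within_open[where f="\<lambda>_. P 1" and S="{1<..}"])
         (use 5 in \<open>auto simp: clamp01_eq_1\<close>)
    then show ?thesis using 5 P'1 by (simp add: clamp01_eq_1)
  qed
qed

definition psi' :: "real \<Rightarrow> real" where
  "psi' t = 30 * t ^ 4 - 60 * t ^ 3 + 30 * t ^ 2"

definition psi'' :: "real \<Rightarrow> real" where
  "psi'' t = 120 * t ^ 3 - 180 * t ^ 2 + 60 * t"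

lemma psi_has_real_derivative: "(psi has_real_derivative psi' t) (at t)"
  unfolding psi_def[abs_def] psi'_def by (auto intro!: derivative_eq_intros simp: algebra_simps)

lemma psi'_has_real_derivative: "(psi' has_real_derivative psi'' t) (at t)"
  unfolding psi'_def[abs_def] psi''_def by (auto intro!: derivative_eq_intros simp: algebra_simps)

lemma psi'_eq: "psi' t = 30 * (t * (t - 1))\<^sup>2"
  by (simp add: psi'_def power2_eq_square power3_eq_cube power4_eq_xxxx algebra_simps)

lemma psi''_eq: "psi'' t = 60 * (t * (t - 1) * (2 * t - 1))"
  by (simp add: psi''_def power2_eq_square power3_eq_cube algebra_simps)

lemma psi_0 [simp]: "psi 0 = 0" and psi_1 [simp]: "psi 1 = 1"
  by (simp_all add: psi_def)

lemma psi_mono: "a \<le> b \<Longrightarrow> psi a \<le> psi b"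
  using DERIV_nonneg_imp_nondecreasing[of a b psi] psi_has_real_derivative
  by (metis psi'_eq mult_nonneg_nonneg zero_le_numeral zero_le_power2)

lemma psi_bounds: "0 \<le> t \<Longrightarrow> t \<le> 1 \<Longrightarrow> 0 \<le> psi t \<and> psi t \<le> 1"
  using psi_mono[of 0 t] psi_mono[of t 1] by simp

lemma abs_psi'_clamp01_le: "\<bar>psi' (clamp01 y)\<bar> \<le> 30 * indicator {0..1} y"
proof (cases "y \<in> {0..1}")
  case True
  have "\<bar>clamp01 y * (clamp01 y - 1)\<bar> \<le> 1"
    using clamp01_bounds[of y] by (auto simp: abs_mult intro!: mult_le_one)
  then have "(clamp01 y * (clamp01 y - 1))\<^sup>2 \<le> 1"
    by (metis abs_le_square_iff abs_one one_power2)
  then show ?thesis using True by (simp add: psi'_eq)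
qed (auto simp: psi'_def clamp01_def)

lemma abs_psi''_clamp01_le: "\<bar>psi'' (clamp01 y)\<bar> \<le> 60"
proof -
  have "\<bar>clamp01 y * (clamp01 y - 1) * (2 * clamp01 y - 1)\<bar> \<le> 1"
    using clamp01_bounds[of y] by (auto simp: abs_mult intro!: mult_le_one)
  then show ?thesis by (simp add: psi''_eq abs_mult)
qed

lemma psi_clamp01_has_real_derivative:
  "((\<lambda>y. psi (clamp01 y)) has_real_derivative psi' (clamp01 y)) (at y)"
  by (rule has_real_derivative_comp_clamp01[OF psi_has_real_derivative]) (simp_all add: psi'_def)

lemma psi'_clamp01_has_real_derivative:
  "((\<lambda>y. psi' (clamp01 y)) has_real_derivative psi'' (clamp01 y)) (at y)"
  by (rule has_real_derivative_comp_clamp01[OF psi'_has_real_derivative]) (simp_all add: psi''_def)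

text \<open>For \<open>n \<ge> 1\<close> the two ramps of \<open>fn n\<close> are disjoint, which gives the explicit derivatives below;
  \<open>fn 0\<close> is constant but not of this form.\<close>
lemma fn_eq_sum_ramps:
  "1 \<le> n \<Longrightarrow> fn n y = psi (clamp01 (y - (real n - 1))) + psi (clamp01 (- y - (real n - 1)))"
  by (auto simp: fn_def clamp01_def abs_if)

definition fn' :: "nat \<Rightarrow> real \<Rightarrow> real" where
  "fn' n y = psi' (clamp01 (y - (real n - 1))) - psi' (clamp01 (- y - (real n - 1)))"

definition fn'' :: "nat \<Rightarrow> real \<Rightarrow> real" where
  "fn'' n y = psi'' (clamp01 (y - (real n - 1))) + psi'' (clamp01 (- y - (real n - 1)))"

lemma fn_has_real_derivative:
  assumes "1 \<le> n" shows "(fn n has_real_derivative fn' n y) (at y)"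
proof -
  have "fn n = (\<lambda>y. psi (clamp01 (y - (real n - 1))) + psi (clamp01 (- y - (real n - 1))))"
    using fn_eq_sum_ramps[OF assms] by blast
  then show ?thesis unfolding fn'_def
    by (auto intro!: derivative_eq_intros DERIV_chain2[OF psi_clamp01_has_real_derivative])
qed

lemma fn'_has_real_derivative: "(fn' n has_real_derivative fn'' n y) (at y)"
  unfolding fn'_def[abs_def] fn''_def
  by (auto intro!: derivative_eq_intros DERIV_chain2[OF psi'_clamp01_has_real_derivative])

lemma deriv_fn: "1 \<le> n \<Longrightarrow> deriv (fn n) = fn' n"
  using fn_has_real_derivative DERIV_imp_deriv by blast

lemma continuous_on_fn: "1 \<le> n \<Longrightarrow> continuous_on UNIV (fn n)"
  using fn_has_real_derivative by (meson DERIV_isCont continuous_at_imp_continuous_on)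

lemma continuous_on_fn': "continuous_on UNIV (fn' n)"
  using fn'_has_real_derivative by (meson DERIV_isCont continuous_at_imp_continuous_on)

lemma continuous_on_fn'': "continuous_on UNIV (fn'' n)"
  unfolding fn''_def[abs_def] psi''_def
  by (intro continuous_intros continuous_on_compose2[OF continuous_on_clamp01]) auto

lemma C2_fn: "1 \<le> n \<Longrightarrow> C2 (fn n)"
  unfolding C2_def deriv_fn DERIV_imp_deriv[OF fn'_has_real_derivative, abs_def]
  using fn_has_real_derivative fn'_has_real_derivative continuous_on_fn''
  by (metis real_differentiable_def)

lemma fn_even: "fn n (- x) = fn n x"
  by (simp add: fn_def)

lemma mono_on_fn: "mono_on {0..} (fn n)"
  by (rule mono_onI) (auto simp: fn_def intro!: psi_mono)

lemma fn_eq_0: "\<bar>x\<bar> \<le> real n - 1 \<Longrightarrow> fn n x = 0"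
  and fn_eq_1: "real n \<le> \<bar>x\<bar> \<Longrightarrow> fn n x = 1"
  and fn_0: "fn 0 x = 1"
  by (simp_all add: fn_def)

lemma fn_bounds: "0 \<le> fn n y" "fn n y \<le> 1"
  using psi_bounds[OF clamp01_bounds] by (auto simp: fn_def clamp01_def[symmetric])

lemma fn'_eq_0: "\<bar>x\<bar> \<le> real n - 1 \<Longrightarrow> fn' n x = 0"
  by (simp add: fn'_def psi'_def clamp01_eq_0)

lemma abs_fn'_le: "\<bar>fn' n y\<bar> \<le> 30 * indicator {real n - 1 .. real n} y + 30 * indicator {- real n .. - (real n - 1)} y"
proof -
  have "\<bar>fn' n y\<bar> \<le> 30 * indicator {0..1} (y - (real n - 1)) + 30 * indicator {0..1} (- y - (real n - 1))"
    unfolding fn'_def using abs_psi'_clamp01_le by (smt (verit))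
  also have "\<dots> = 30 * indicator {real n - 1 .. real n} y + 30 * indicator {- real n .. - (real n - 1)} y"
    by (auto simp: indicator_def)
  finally show ?thesis .
qed

lemma abs_fn''_le: "\<bar>fn'' n y\<bar> \<le> 120"
  using abs_psi''_clamp01_le[of "y - (real n - 1)"] abs_psi''_clamp01_le[of "- y - (real n - 1)"]
  unfolding fn''_def by linarith

lemma abs_fn'_diff_le: "\<bar>fn' n a - fn' n b\<bar> \<le> 120 * \<bar>a - b\<bar>"
  using field_differentiable_bound[of UNIV "fn' n" "fn'' n" 120 a b]
    fn'_has_real_derivative abs_fn''_le by (auto intro: has_field_derivative_at_within)

lemma abs_fn_taylor_remainder_le:
  assumes n: "1 \<le> n" shows "\<bar>fn n (x + h) - fn n x - fn' n x * h\<bar> \<le> 120 * h\<^sup>2"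
proof -
  define r where "r t = fn n (x + t) - fn' n x * t" for t
  have "(r has_real_derivative fn' n (x + t) - fn' n x) (at t within cball 0 \<bar>h\<bar>)" for t
    unfolding r_def[abs_def]
    by (auto intro!: derivative_eq_intros DERIV_chain2[OF fn_has_real_derivative[OF n]])
  moreover have "\<bar>fn' n (x + t) - fn' n x\<bar> \<le> 120 * \<bar>h\<bar>" if "t \<in> cball 0 \<bar>h\<bar>" for t
    using abs_fn'_diff_le[of n "x + t" x] that by simp
  ultimately have "norm (r h - r 0) \<le> 120 * \<bar>h\<bar> * norm (h - 0)"
    by (intro field_differentiable_bound[where S="cball 0 \<bar>h\<bar>"]) auto
  then show ?thesis by (simp add: r_def power2_eq_square abs_mult_self_eq)
qed

subsection \<open>Integrals of powers of \<open>|h|\<close> and a Fubini lemma\<close>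

lemma has_bochner_integral_even_extension:
  fixes f :: "real \<Rightarrow> real"
  assumes [measurable]: "f \<in> borel_measurable borel" "A \<in> sets borel"
    and A: "A \<subseteq> {0..}" and nonneg: "\<And>t. t \<in> A \<Longrightarrow> 0 \<le> f t" and I: "(f has_integral I) A"
  shows "has_bochner_integral lborel (\<lambda>h. indicator A \<bar>h\<bar> * f \<bar>h\<bar>) (2 * I)"
proof -
  have "(\<integral>\<^sup>+t. ennreal (f t * indicator A t) \<partial>lborel) = (\<integral>\<^sup>+t. ennreal (f t) * indicator A t \<partial>lborel)"
    by (intro nn_integral_cong) (simp add: indicator_def)
  also have "\<dots> = ennreal I"
    by (rule nn_integral_has_integral_lebesgue'[OF nonneg I])
  finally have "has_bochner_integral lborel (\<lambda>t. f t * indicator A t) I"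
    using nonneg has_integral_nonneg[OF I nonneg]
    by (intro has_bochner_integral_nn_integral) (auto simp: indicator_def)
  then have "has_bochner_integral lborel (\<lambda>h. indicator {0..} h *\<^sub>R (indicator A \<bar>h\<bar> * f \<bar>h\<bar>)) I"
    by (rule has_bochner_integral_cong[THEN iffD1, rotated -1]) (use A in \<open>auto simp: indicator_def\<close>)
  from has_bochner_integral_even_function[OF this] show ?thesis
    by simp
qed

lemma has_bochner_integral_abs_powr_tail:
  fixes s \<alpha> :: real
  assumes "0 < s" "0 < \<alpha>"
  shows "has_bochner_integral lborel (\<lambda>h. indicator {h. s \<le> \<bar>h\<bar>} h / \<bar>h\<bar> powr (1 + \<alpha>))
    (2 * s powr (- \<alpha>) / \<alpha>)"
proof -
  have "((\<lambda>t. t powr (-1 - \<alpha>)) has_integral s powr (- \<alpha>) / \<alpha>) {s..}"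
    using has_integral_powr_to_inf[of "-1 - \<alpha>" s] assms by simp
  moreover have "t powr (-1 - \<alpha>) = 1 / t powr (1 + \<alpha>)" for t
    using powr_minus_divide[of t "1 + \<alpha>"] by (simp add: algebra_simps)
  ultimately have "((\<lambda>t. 1 / t powr (1 + \<alpha>)) has_integral s powr (- \<alpha>) / \<alpha>) {s..}"
    by simp
  from has_bochner_integral_even_extension[OF _ _ _ _ this] assms show ?thesis
    by (auto simp: indicator_def cong: has_bochner_integral_cong)
qed

lemma has_bochner_integral_abs_powr_Icc:
  fixes c \<beta> :: real
  assumes "0 \<le> c" "-1 < \<beta>"
  shows "has_bochner_integral lborel (\<lambda>h. indicator {-c..c} h * \<bar>h\<bar> powr \<beta>)
    (2 * c powr (\<beta> + 1) / (\<beta> + 1))"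
proof -
  have "((\<lambda>t. t powr \<beta>) has_integral c powr (\<beta> + 1) / (\<beta> + 1)) {0..c}"
    using has_integral_powr_from_0 assms by simp
  from has_bochner_integral_even_extension[OF _ _ _ _ this]
  show ?thesis
    by (rule has_bochner_integral_cong[THEN iffD1, rotated -1]) (auto simp: indicator_def)
qed

lemma integral_radial_primitive_swap:
  fixes \<mu> :: "real measure" and w D :: "real \<Rightarrow> real"
  assumes \<mu>: "sigma_finite_measure \<mu>" and sets_\<mu>: "sets \<mu> = sets borel"
    and [measurable]: "w \<in> borel_measurable borel" "D \<in> borel_measurable borel"
    and w_nonneg: "\<And>h. 0 \<le> w h"
    and finite: "(\<integral>\<^sup>+s. ennreal (\<bar>D s\<bar> * indicator {0<..} s) *
        (\<integral>\<^sup>+h. ennreal (w h * indicator {h. s \<le> \<bar>h\<bar>} h) \<partial>\<mu>) \<partial>lborel) < \<infinity>"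
  shows "(\<integral>h. w h * (\<integral>s. D s * indicator {0<..\<bar>h\<bar>} s \<partial>lborel) \<partial>\<mu>)
       = (\<integral>s. D s * indicator {0<..} s * (\<integral>h. w h * indicator {h. s \<le> \<bar>h\<bar>} h \<partial>\<mu>) \<partial>lborel)"
proof -
  note sets_\<mu>[measurable_cong]
  interpret \<mu>: sigma_finite_measure \<mu> by (rule \<mu>)
  interpret pair_sigma_finite \<mu> lborel by unfold_locales
  define F where "F = (\<lambda>(h::real, s::real). w h * (D s * indicator {0<..\<bar>h\<bar>} s))"
  have ind: "indicator {0<..\<bar>h\<bar>} s = (indicator {p. 0 < snd p \<and> snd p \<le> \<bar>fst p\<bar>} (h, s) :: real)"
    for h s :: real
    by (auto simp: indicator_def)
  have "F \<in> borel_measurable (borel \<Otimes>\<^sub>M borel)"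
    unfolding F_def ind by measurable
  then have [measurable]: "F \<in> borel_measurable (\<mu> \<Otimes>\<^sub>M lborel)"
    by (subst measurable_cong_sets[OF sets_pair_measure_cong[OF sets_\<mu> sets_lborel] refl])
  have "(\<integral>\<^sup>+p. ennreal (norm (F p)) \<partial>(\<mu> \<Otimes>\<^sub>M lborel))
      = (\<integral>\<^sup>+s. (\<integral>\<^sup>+h. ennreal (norm (F (h, s))) \<partial>\<mu>) \<partial>lborel)"
    by (rule nn_integral_snd[symmetric]) measurable
  also have "\<dots> = (\<integral>\<^sup>+s. (\<integral>\<^sup>+h. ennreal (\<bar>D s\<bar> * indicator {0<..} s) *
      ennreal (w h * indicator {h. s \<le> \<bar>h\<bar>} h) \<partial>\<mu>) \<partial>lborel)"
    by (intro nn_integral_cong)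
       (auto simp: F_def indicator_def abs_mult w_nonneg ennreal_mult'' mult_ac abs_of_nonneg)
  also have "\<dots> = (\<integral>\<^sup>+s. ennreal (\<bar>D s\<bar> * indicator {0<..} s) *
      (\<integral>\<^sup>+h. ennreal (w h * indicator {h. s \<le> \<bar>h\<bar>} h) \<partial>\<mu>) \<partial>lborel)"
    by (intro nn_integral_cong nn_integral_cmult) measurable
  finally have "integrable (\<mu> \<Otimes>\<^sub>M lborel) F"
    using finite by (intro integrableI_bounded) auto
  moreover have "(\<integral>h. F (h, s) \<partial>\<mu>) = D s * indicator {0<..} s * (\<integral>h. w h * indicator {h. s \<le> \<bar>h\<bar>} h \<partial>\<mu>)" for s
  proof -
    have "(\<integral>h. F (h, s) \<partial>\<mu>) = (\<integral>h. (D s * indicator {0<..} s) * (w h * indicator {h. s \<le> \<bar>h\<bar>} h) \<partial>\<mu>)"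
      by (intro Bochner_Integration.integral_cong) (auto simp: F_def indicator_def)
    then show ?thesis by simp
  qed
  ultimately show ?thesis
    using Fubini_integral[of "\<lambda>h s. F (h, s)"] by (simp add: F_def)
qed

subsection \<open>The fractional Laplacian of \<open>fn n\<close>\<close>

definition sym_incr :: "nat \<Rightarrow> real \<Rightarrow> real \<Rightarrow> real" where
  "sym_incr n x h = (fn n (x + h) + fn n (x - h)) / 2 - fn n x"

definition sym_slope :: "nat \<Rightarrow> real \<Rightarrow> real \<Rightarrow> real" where
  "sym_slope n x s = (fn' n (x + s) - fn' n (x - s)) / 2"

text \<open>One unit-length plateau of height 15 for each way a ramp of \<open>fn n\<close> can meet \<open>x + s\<close> or
  \<open>x - s\<close>.\<close>
definition slope_majorant :: "nat \<Rightarrow> real \<Rightarrow> real \<Rightarrow> real" where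
  "slope_majorant n x s = 15 * (indicator {real n - 1 - x .. real n - x} s
      + indicator {- real n - x .. - (real n - 1) - x} s
      + indicator {x - real n .. x - (real n - 1)} s + indicator {x + (real n - 1) .. x + real n} s)"

lemma borel_measurable_sym_slope [measurable]: "sym_slope n x \<in> borel_measurable borel"
proof -
  have [measurable]: "fn' n \<in> borel_measurable borel"
    by (rule borel_measurable_continuous_onI[OF continuous_on_fn'])
  show ?thesis unfolding sym_slope_def[abs_def] by measurable
qed

lemma sym_incr_eq_integral:
  assumes "1 \<le> n"
  shows "sym_incr n x h = (\<integral>s. sym_slope n x s * indicator {0<..\<bar>h\<bar>} s \<partial>lborel)"
proof -
  have deriv: "(sym_incr n x has_real_derivative sym_slope n x s) (at s)" for s
    unfolding sym_incr_def[abs_def] sym_slope_def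
    by (auto intro!: derivative_eq_intros DERIV_chain2[OF fn_has_real_derivative[OF assms]]
        simp: field_simps)
  have "isCont (sym_slope n x) s" for s
    unfolding sym_slope_def using continuous_on_fn'
    by (intro continuous_intros)
       (auto simp: continuous_on_eq_continuous_at intro: isCont_o2[where g="fn' n"])
  then have "(\<integral>s. sym_slope n x s * indicator {0..\<bar>h\<bar>} s \<partial>lborel) = sym_incr n x \<bar>h\<bar> - sym_incr n x 0"
    by (intro integral_FTC_Icc_real) (auto intro: deriv)
  moreover have "(\<integral>s. sym_slope n x s * indicator {0<..\<bar>h\<bar>} s \<partial>lborel)
      = (\<integral>s. sym_slope n x s * indicator {0..\<bar>h\<bar>} s \<partial>lborel)"
    by (intro Bochner_Integration.integral_cong) (auto simp: indicator_def sym_slope_def)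
  moreover have "sym_incr n x \<bar>h\<bar> - sym_incr n x 0 = sym_incr n x h"
    by (simp add: sym_incr_def abs_if)
  ultimately show ?thesis by simp
qed

lemma abs_sym_slope_le: "\<bar>sym_slope n x s\<bar> \<le> 120 * \<bar>s\<bar>"
  using abs_fn'_diff_le[of n "x + s" "x - s"] by (simp add: sym_slope_def)

lemma abs_sym_slope_le_majorant: "\<bar>sym_slope n x s\<bar> \<le> slope_majorant n x s"
proof -
  have "\<bar>sym_slope n x s\<bar> \<le> (\<bar>fn' n (x + s)\<bar> + \<bar>fn' n (x - s)\<bar>) / 2"
    unfolding sym_slope_def by simp
  also have "\<dots> \<le> slope_majorant n x s"
    using abs_fn'_le[of n "x + s"] abs_fn'_le[of n "x - s"]
    unfolding slope_majorant_def by (auto simp: indicator_def)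
  finally show ?thesis .
qed

lemma has_bochner_integral_slope_majorant: "has_bochner_integral lborel (slope_majorant n x) 60"
proof -
  have unit: "has_bochner_integral lborel (indicator {a..a + 1} :: real \<Rightarrow> real) 1" for a :: real
    using has_bochner_integral_real_indicator[of "{a..a + 1}" lborel] by simp
  have "has_bochner_integral lborel (\<lambda>s. (15::real) * (indicator {real n - 1 - x .. (real n - 1 - x) + 1} s
      + indicator {- real n - x .. (- real n - x) + 1} s + indicator {x - real n .. (x - real n) + 1} s
      + indicator {x + (real n - 1) .. (x + (real n - 1)) + 1} s)) (15 * (1 + 1 + 1 + 1))"
    by (intro has_bochner_integral_mult_right has_bochner_integral_add unit)
  then show ?thesis
    unfolding slope_majorant_def by (simp add: algebra_simps)
qed

definition slope_bound :: "real \<Rightarrow> nat \<Rightarrow> real \<Rightarrow> real \<Rightarrow> real" where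
  "slope_bound \<alpha> n x s = 120 * (indicator {-1..1} s * \<bar>s\<bar> powr (1 - \<alpha>)) + slope_majorant n x s"

definition slope_bound_total :: "real \<Rightarrow> real" where
  "slope_bound_total \<alpha> = 240 / (2 - \<alpha>) + 60"

lemma slope_majorant_nonneg: "0 \<le> slope_majorant n x s"
  unfolding slope_majorant_def by simp

lemma slope_bound_nonneg: "0 \<le> slope_bound \<alpha> n x s"
  unfolding slope_bound_def using slope_majorant_nonneg by simp

lemma abs_sym_slope_le_slope_bound: "\<bar>sym_slope n x s\<bar> \<le> slope_bound \<alpha> n x s"
  using abs_sym_slope_le_majorant[of n x s] by (simp add: slope_bound_def add_increasing)

lemma has_bochner_integral_slope_bound:
  assumes "\<alpha> < 2" shows "has_bochner_integral lborel (slope_bound \<alpha> n x) (slope_bound_total \<alpha>)"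
proof -
  have "has_bochner_integral lborel (slope_bound \<alpha> n x) (120 * (2 * 1 powr (1 - \<alpha> + 1) / (1 - \<alpha> + 1)) + 60)"
    unfolding slope_bound_def[abs_def]
    by (intro has_bochner_integral_add has_bochner_integral_mult_right
        has_bochner_integral_abs_powr_Icc has_bochner_integral_slope_majorant) (use assms in auto)
  then show ?thesis by (simp add: slope_bound_total_def)
qed

text \<open>Near \<open>0\<close> the slope is linear in \<open>s\<close>, which compensates the singularity \<open>s\<^sup>-\<^sup>\<alpha>\<close>.\<close>
lemma abs_sym_slope_powr_le_slope_bound:
  assumes s: "0 < s" and \<alpha>: "0 \<le> \<alpha>"
  shows "\<bar>sym_slope n x s\<bar> * s powr (- \<alpha>) \<le> slope_bound \<alpha> n x s"
proof (cases "s \<le> 1")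
  case True
  have "\<bar>sym_slope n x s\<bar> * s powr (- \<alpha>) \<le> 120 * s * s powr (- \<alpha>)"
    using abs_sym_slope_le[of n x s] s by (simp add: mult_right_mono)
  also have "\<dots> = 120 * s powr (1 - \<alpha>)"
    using s by (simp add: powr_diff powr_minus_divide)
  also have "\<dots> \<le> slope_bound \<alpha> n x s"
    using True s slope_majorant_nonneg[of n x s] by (simp add: slope_bound_def indicator_def)
  finally show ?thesis .
next
  case False
  then have "s powr (- \<alpha>) \<le> 1"
    using \<alpha> by (simp add: powr_minus_divide ge_one_powr_ge_zero)
  then have "\<bar>sym_slope n x s\<bar> * s powr (- \<alpha>) \<le> \<bar>sym_slope n x s\<bar>"
    by (simp add: mult_left_le)
  then show ?thesis using abs_sym_slope_le_slope_bound[of n x s \<alpha>] by linarith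
qed

definition lap_integrand :: "real \<Rightarrow> nat \<Rightarrow> real \<Rightarrow> real \<Rightarrow> real" where
  "lap_integrand \<alpha> n x h =
    (fn n (x + h) - fn n x - fn' n x * h * indicator {-1..1} h) / \<bar>h\<bar> powr (1 + \<alpha>)"

definition lap_majorant :: "real \<Rightarrow> real \<Rightarrow> real" where
  "lap_majorant \<alpha> h =
    120 * (indicator {-1..1} h * \<bar>h\<bar> powr (1 - \<alpha>)) + indicator {h. 1 \<le> \<bar>h\<bar>} h / \<bar>h\<bar> powr (1 + \<alpha>)"

lemma frac_lap_fn_eq_integral_lap_integrand:
  "1 \<le> n \<Longrightarrow> frac_lap \<alpha> (fn n) x = integral\<^sup>L lborel (lap_integrand \<alpha> n x)"
  unfolding frac_lap_def deriv_fn lap_integrand_def ..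

lemma integrable_lap_majorant:
  assumes "0 < \<alpha>" "\<alpha> < 2" shows "integrable lborel (lap_majorant \<alpha>)"
proof -
  have "has_bochner_integral lborel (lap_majorant \<alpha>)
      (120 * (2 * 1 powr (1 - \<alpha> + 1) / (1 - \<alpha> + 1)) + 2 * 1 powr (- \<alpha>) / \<alpha>)"
    unfolding lap_majorant_def[abs_def]
    by (intro has_bochner_integral_add has_bochner_integral_mult_right
        has_bochner_integral_abs_powr_Icc has_bochner_integral_abs_powr_tail) (use assms in auto)
  then show ?thesis by (rule integrable.intros)
qed

lemma abs_lap_integrand_le:
  assumes n: "1 \<le> n" shows "\<bar>lap_integrand \<alpha> n x h\<bar> \<le> lap_majorant \<alpha> h"
proof -
  consider "h = 0" | "h \<noteq> 0" "\<bar>h\<bar> \<le> 1" | "1 < \<bar>h\<bar>" by linarith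
  then show ?thesis
  proof cases
    case 1 then show ?thesis by (simp add: lap_integrand_def lap_majorant_def)
  next
    case 2
    have "\<bar>lap_integrand \<alpha> n x h\<bar> = \<bar>fn n (x + h) - fn n x - fn' n x * h\<bar> / \<bar>h\<bar> powr (1 + \<alpha>)"
      using 2 by (simp add: lap_integrand_def indicator_def abs_le_iff)
    also have "\<dots> \<le> 120 * \<bar>h\<bar> powr 2 / \<bar>h\<bar> powr (1 + \<alpha>)"
      using abs_fn_taylor_remainder_le[OF n, of x h] 2 by (intro divide_right_mono) (simp_all add: powr_numeral)
    also have "\<dots> = 120 * \<bar>h\<bar> powr (1 - \<alpha>)"
      using powr_diff[of "\<bar>h\<bar>" 2 "1 + \<alpha>"] by simp
    also have "\<dots> \<le> lap_majorant \<alpha> h"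
      using 2 by (simp add: lap_majorant_def indicator_def abs_le_iff)
    finally show ?thesis .
  next
    case 3
    then have out: "indicator {-1..1} h = (0::real)" "indicator {h. 1 \<le> \<bar>h\<bar>} h = (1::real)"
      by (auto simp: indicator_def)
    have "\<bar>lap_integrand \<alpha> n x h\<bar> = \<bar>fn n (x + h) - fn n x\<bar> / \<bar>h\<bar> powr (1 + \<alpha>)"
      by (simp add: lap_integrand_def out)
    also have "\<dots> \<le> 1 / \<bar>h\<bar> powr (1 + \<alpha>)"
      using fn_bounds[of n "x + h"] fn_bounds[of n x] by (intro divide_right_mono) auto
    also have "\<dots> = lap_majorant \<alpha> h"
      by (simp add: lap_majorant_def out)
    finally show ?thesis .
  qed
qed

lemma integrable_lap_integrand:
  assumes n: "1 \<le> n" and "0 < \<alpha>" "\<alpha> < 2"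
  shows "integrable lborel (lap_integrand \<alpha> n x)"
proof (rule Bochner_Integration.integrable_bound[OF integrable_lap_majorant[OF assms(2,3)]])
  have [measurable]: "fn n \<in> borel_measurable borel" "fn' n \<in> borel_measurable borel"
    using continuous_on_fn[OF n] continuous_on_fn' by (auto intro: borel_measurable_continuous_onI)
  show "lap_integrand \<alpha> n x \<in> borel_measurable lborel"
    unfolding lap_integrand_def[abs_def] by measurable
qed (auto intro!: AE_I2 order_trans[OF abs_lap_integrand_le[OF n]])

lemma nn_integral_eq_if_has_bochner_integral:
  fixes f :: "'a \<Rightarrow> real"
  assumes "has_bochner_integral M f I" "\<And>x. 0 \<le> f x"
  shows "(\<integral>\<^sup>+x. ennreal (f x) \<partial>M) = ennreal I"
  using nn_integral_eq_integral[OF integrable.intros[OF assms(1)]]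
    has_bochner_integral_integral_eq[OF assms(1)] assms(2) by simp

lemma frac_lap_fn_eq_integral_sym_incr:
  assumes n: "1 \<le> n" and \<alpha>: "0 < \<alpha>" "\<alpha> < 2"
  shows "frac_lap \<alpha> (fn n) x = (\<integral>h. 1 / \<bar>h\<bar> powr (1 + \<alpha>) * sym_incr n x h \<partial>lborel)"
proof -
  let ?k = "lap_integrand \<alpha> n x"
  have int: "integrable lborel ?k" "integrable lborel (\<lambda>h. ?k (- h))"
    using integrable_lap_integrand[OF assms] lborel_integrable_real_affine_iff[of "-1" ?k 0] by simp_all
  have "integral\<^sup>L lborel ?k = (\<integral>h. ?k (- h) \<partial>lborel)"
    using lborel_integral_real_affine[of "-1" ?k 0] by simp
  then have "integral\<^sup>L lborel ?k = (\<integral>h. (?k h + ?k (- h)) / 2 \<partial>lborel)"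
    using int by simp
  also have "\<dots> = (\<integral>h. 1 / \<bar>h\<bar> powr (1 + \<alpha>) * sym_incr n x h \<partial>lborel)"
  proof (intro Bochner_Integration.integral_cong refl)
    fix h :: real
    let ?q = "1 / \<bar>h\<bar> powr (1 + \<alpha>)" and ?c = "fn' n x * h * indicator {-1..1} h"
    have "indicator {-1..1} (- h) = (indicator {-1..1} h :: real)"
      by (auto simp: indicator_def)
    then have "?k h = (fn n (x + h) - fn n x - ?c) * ?q" "?k (- h) = (fn n (x - h) - fn n x + ?c) * ?q"
      by (simp_all add: lap_integrand_def)
    moreover have "((a - b - c) * q + (d - b + c) * q) / 2 = q * ((a + d) / 2 - b)" for a b c d q :: real
      by (simp add: field_simps)
    ultimately show "(?k h + ?k (- h)) / 2 = ?q * sym_incr n x h"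
      unfolding sym_incr_def by presburger
  qed
  finally show ?thesis
    using frac_lap_fn_eq_integral_lap_integrand[OF n] by simp
qed

lemma frac_lap_fn_eq_integral_sym_slope:
  assumes n: "1 \<le> n" and \<alpha>: "0 < \<alpha>" "\<alpha> < 2"
  shows "frac_lap \<alpha> (fn n) x =
    (\<integral>s. sym_slope n x s * indicator {0<..} s * (2 * s powr (- \<alpha>) / \<alpha>) \<partial>lborel)"
proof -
  let ?w = "\<lambda>h. 1 / \<bar>h\<bar> powr (1 + \<alpha>)"
  have tail: "has_bochner_integral lborel (\<lambda>h. ?w h * indicator {h. s \<le> \<bar>h\<bar>} h) (2 * s powr (- \<alpha>) / \<alpha>)"
    if "0 < s" for s
    using has_bochner_integral_abs_powr_tail[OF that \<alpha>(1)] by simp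
  have "ennreal (\<bar>sym_slope n x s\<bar> * indicator {0<..} s) *
      (\<integral>\<^sup>+h. ennreal (?w h * indicator {h. s \<le> \<bar>h\<bar>} h) \<partial>lborel)
      \<le> ennreal (2 / \<alpha> * slope_bound \<alpha> n x s)" for s
  proof (cases "0 < s")
    case True
    have "\<bar>sym_slope n x s\<bar> * (2 * s powr (- \<alpha>) / \<alpha>) \<le> 2 / \<alpha> * slope_bound \<alpha> n x s"
      using abs_sym_slope_powr_le_slope_bound[OF True, of \<alpha> n x] \<alpha>
      by (simp add: mult_left_mono divide_right_mono)
    then show ?thesis
      using True \<alpha> nn_integral_eq_if_has_bochner_integral[OF tail[OF True]]
      by (simp add: ennreal_mult[symmetric] ennreal_leI)
  qed simp
  then have "(\<integral>\<^sup>+s. ennreal (\<bar>sym_slope n x s\<bar> * indicator {0<..} s) *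
      (\<integral>\<^sup>+h. ennreal (?w h * indicator {h. s \<le> \<bar>h\<bar>} h) \<partial>lborel) \<partial>lborel)
      \<le> (\<integral>\<^sup>+s. ennreal (2 / \<alpha> * slope_bound \<alpha> n x s) \<partial>lborel)" (is "?I \<le> _")
    by (intro nn_integral_mono)
  also have "\<dots> = ennreal (2 / \<alpha> * slope_bound_total \<alpha>)"
    using \<alpha> slope_bound_nonneg
    by (intro nn_integral_eq_if_has_bochner_integral has_bochner_integral_mult_right
        has_bochner_integral_slope_bound) auto
  finally have "?I < \<infinity>"
    by (simp add: le_less_trans)
  then have "(\<integral>h. ?w h * (\<integral>s. sym_slope n x s * indicator {0<..\<bar>h\<bar>} s \<partial>lborel) \<partial>lborel)
      = (\<integral>s. sym_slope n x s * indicator {0<..} s * (\<integral>h. ?w h * indicator {h. s \<le> \<bar>h\<bar>} h \<partial>lborel) \<partial>lborel)"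
    by (intro integral_radial_primitive_swap sigma_finite_lborel) (auto simp: top.not_eq_extremum)
  also have "\<dots> = (\<integral>s. sym_slope n x s * indicator {0<..} s * (2 * s powr (- \<alpha>) / \<alpha>) \<partial>lborel)"
  proof (intro Bochner_Integration.integral_cong refl)
    fix s :: real
    show "sym_slope n x s * indicator {0<..} s * (\<integral>h. ?w h * indicator {h. s \<le> \<bar>h\<bar>} h \<partial>lborel)
        = sym_slope n x s * indicator {0<..} s * (2 * s powr (- \<alpha>) / \<alpha>)"
      using has_bochner_integral_integral_eq[OF tail, of s] by (cases "0 < s") auto
  qed
  finally show ?thesis
    using frac_lap_fn_eq_integral_sym_incr[OF assms] sym_incr_eq_integral[OF n] by simp
qed

lemma abs_sym_slope_tail_le:
  assumes "0 < \<alpha>"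
  shows "\<bar>sym_slope n x s * indicator {0<..} s * (2 * s powr (- \<alpha>) / \<alpha>)\<bar> \<le> 2 / \<alpha> * slope_bound \<alpha> n x s"
proof (cases "0 < s")
  case True
  have "\<bar>sym_slope n x s * indicator {0<..} s * (2 * s powr (- \<alpha>) / \<alpha>)\<bar>
      = 2 / \<alpha> * (\<bar>sym_slope n x s\<bar> * s powr (- \<alpha>))"
    using True assms by (simp add: abs_mult)
  also have "\<dots> \<le> 2 / \<alpha> * slope_bound \<alpha> n x s"
    using abs_sym_slope_powr_le_slope_bound[OF True, of \<alpha>] assms by (intro mult_left_mono) auto
  finally show ?thesis .
qed (use slope_bound_nonneg assms in simp)

lemma integrable_sym_slope_tail:
  assumes "0 < \<alpha>" "\<alpha> < 2"
  shows "integrable lborel (\<lambda>s. sym_slope n x s * indicator {0<..} s * (2 * s powr (- \<alpha>) / \<alpha>))"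
proof (rule Bochner_Integration.integrable_bound)
  show "integrable lborel (\<lambda>s. 2 / \<alpha> * slope_bound \<alpha> n x s)"
    by (rule integrable.intros[OF has_bochner_integral_mult_right[OF has_bochner_integral_slope_bound[OF assms(2)]]])
  show "AE s in lborel. norm (sym_slope n x s * indicator {0<..} s * (2 * s powr (- \<alpha>) / \<alpha>))
      \<le> norm (2 / \<alpha> * slope_bound \<alpha> n x s)"
    using abs_sym_slope_tail_le[OF assms(1)] slope_bound_nonneg assms(1)
    by (intro AE_I2) (simp add: abs_of_nonneg)
qed measurable

lemma abs_frac_lap_fn_le:
  assumes n: "1 \<le> n" and \<alpha>: "0 < \<alpha>" "\<alpha> < 2"
  shows "\<bar>frac_lap \<alpha> (fn n) x\<bar> \<le> 2 / \<alpha> * slope_bound_total \<alpha>"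
proof -
  have bound: "has_bochner_integral lborel (\<lambda>s. 2 / \<alpha> * slope_bound \<alpha> n x s) (2 / \<alpha> * slope_bound_total \<alpha>)"
    by (intro has_bochner_integral_mult_right has_bochner_integral_slope_bound \<alpha>)
  show ?thesis
    unfolding frac_lap_fn_eq_integral_sym_slope[OF assms] has_bochner_integral_integral_eq[OF bound, symmetric]
    by (rule integral_abs_bound_integral[OF integrable_sym_slope_tail[OF \<alpha>] integrable.intros[OF bound]
          abs_sym_slope_tail_le[OF \<alpha>(1)]])
qed

text \<open>Away from the ramps \<open>fn n\<close> and its derivative vanish at \<open>x\<close>, so the integrand is
  nonnegative and supported where \<open>|h| \<ge> n - 1 - |x|\<close>.\<close>
lemma abs_frac_lap_fn_le_interior:
  assumes n: "1 \<le> n" and \<alpha>: "0 < \<alpha>" "\<alpha> < 2" and x: "\<bar>x\<bar> < real n - 1"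
  shows "\<bar>frac_lap \<alpha> (fn n) x\<bar> \<le> 2 / (\<alpha> * (real n - 1 - \<bar>x\<bar>) powr \<alpha>)"
proof -
  define d where "d = real n - 1 - \<bar>x\<bar>"
  have d: "0 < d" using x by (simp add: d_def)
  have at_x: "fn n x = 0" "fn' n x = 0"
    using x by (simp_all add: fn_eq_0 fn'_eq_0)
  have nonneg: "0 \<le> lap_integrand \<alpha> n x h" for h
    using fn_bounds[of n "x + h"] by (simp add: lap_integrand_def at_x)
  have le: "lap_integrand \<alpha> n x h \<le> indicator {h. d \<le> \<bar>h\<bar>} h / \<bar>h\<bar> powr (1 + \<alpha>)" for h
  proof (cases "d \<le> \<bar>h\<bar>")
    case True
    then show ?thesis
      using fn_bounds[of n "x + h"] by (simp add: lap_integrand_def at_x divide_right_mono)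
  next
    case False
    then have "fn n (x + h) = 0" by (intro fn_eq_0) (simp add: d_def)
    then show ?thesis using False by (simp add: lap_integrand_def at_x)
  qed
  note tail = has_bochner_integral_abs_powr_tail[OF d \<alpha>(1)]
  have "integral\<^sup>L lborel (lap_integrand \<alpha> n x) \<le> 2 * d powr (- \<alpha>) / \<alpha>"
    using integral_mono[OF integrable_lap_integrand[OF assms(1-3)] integrable.intros[OF tail] le]
    by (simp add: has_bochner_integral_integral_eq[OF tail])
  moreover have "0 \<le> integral\<^sup>L lborel (lap_integrand \<alpha> n x)"
    using nonneg by simp
  ultimately show ?thesis
    by (simp add: frac_lap_fn_eq_integral_lap_integrand[OF n] d_def powr_minus_divide ac_simps)
qed

subsection \<open>Symmetric laws and the scaling limit\<close>

lemma borel_measurable_measure_abs_ge: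
  fixes \<nu> :: "real measure"
  assumes "finite_measure \<nu>" "sets \<nu> = sets borel"
  shows "(\<lambda>s. measure \<nu> {h. s \<le> \<bar>h\<bar>}) \<in> borel_measurable borel"
proof -
  interpret finite_measure \<nu> by fact
  have "mono (\<lambda>s. - measure \<nu> {h. s \<le> \<bar>h\<bar>})"
  proof (rule monoI)
    fix s t :: real
    assume "s \<le> t"
    moreover have "{h. s \<le> \<bar>h\<bar>} \<in> sets \<nu>"
      unfolding assms(2) by measurable
    ultimately have "measure \<nu> {h. t \<le> \<bar>h\<bar>} \<le> measure \<nu> {h. s \<le> \<bar>h\<bar>}"
      by (intro finite_measure_mono) auto
    then show "- measure \<nu> {h. s \<le> \<bar>h\<bar>} \<le> - measure \<nu> {h. t \<le> \<bar>h\<bar>}"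
      by simp
  qed
  from borel_measurable_uminus[OF borel_measurable_mono[OF this]] show ?thesis
    by simp
qed

text \<open>The analogue of \<open>frac_lap_fn_eq_integral_sym_slope\<close> for a symmetric probability
  measure \<open>\<nu>\<close>: the tail \<open>2 s\<^sup>-\<^sup>\<alpha> / \<alpha>\<close> of the stable kernel is replaced by the tail of \<open>\<nu>\<close>.\<close>
lemma integral_fn_incr_symmetric:
  fixes \<nu> :: "real measure"
  assumes n: "1 \<le> n" and \<nu>: "prob_space \<nu>" "sets \<nu> = sets borel" and sym: "distr \<nu> borel uminus = \<nu>"
  shows "(\<integral>h. fn n (x + h) - fn n x \<partial>\<nu>)
    = (\<integral>s. sym_slope n x s * indicator {0<..} s * measure \<nu> {h. s \<le> \<bar>h\<bar>} \<partial>lborel)"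
proof -
  interpret prob_space \<nu> by (rule \<nu>(1))
  note \<nu>(2)[measurable_cong]
  have [measurable]: "fn n \<in> borel_measurable borel"
    by (rule borel_measurable_continuous_onI[OF continuous_on_fn[OF n]])
  have bounded: "\<bar>fn n (x + h) - fn n x\<bar> \<le> 1" for h
    using fn_bounds[of n "x + h"] fn_bounds[of n x] by linarith
  have int: "integrable \<nu> (\<lambda>h. fn n (x + h) - fn n x)" "integrable \<nu> (\<lambda>h. fn n (x - h) - fn n x)"
    using bounded[of "- _"] bounded by (auto intro!: integrable_const_bound[where B=1] AE_I2)
  have "(\<integral>h. fn n (x + h) - fn n x \<partial>\<nu>) = (\<integral>h. fn n (x + h) - fn n x \<partial>distr \<nu> borel uminus)"
    using sym by simp
  also have "\<dots> = (\<integral>h. fn n (x - h) - fn n x \<partial>\<nu>)"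
    by (subst integral_distr) simp_all
  finally have reflected: "(\<integral>h. fn n (x + h) - fn n x \<partial>\<nu>) = (\<integral>h. fn n (x - h) - fn n x \<partial>\<nu>)" .
  have "(\<integral>h. sym_incr n x h \<partial>\<nu>) = (\<integral>h. ((fn n (x + h) - fn n x) + (fn n (x - h) - fn n x)) / 2 \<partial>\<nu>)"
    by (intro Bochner_Integration.integral_cong) (simp_all add: sym_incr_def field_simps)
  also have "\<dots> = ((\<integral>h. fn n (x + h) - fn n x \<partial>\<nu>) + (\<integral>h. fn n (x - h) - fn n x \<partial>\<nu>)) / 2"
    by (simp only: integral_divide_zero Bochner_Integration.integral_add[OF int])
  finally have "(\<integral>h. fn n (x + h) - fn n x \<partial>\<nu>) = (\<integral>h. sym_incr n x h \<partial>\<nu>)"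
    using reflected by simp
  also have "\<dots> = (\<integral>h. 1 * (\<integral>s. sym_slope n x s * indicator {0<..\<bar>h\<bar>} s \<partial>lborel) \<partial>\<nu>)"
    by (simp add: sym_incr_eq_integral[OF n])
  also have "\<dots> = (\<integral>s. sym_slope n x s * indicator {0<..} s * (\<integral>h. 1 * indicator {h. s \<le> \<bar>h\<bar>} h \<partial>\<nu>) \<partial>lborel)"
  proof (rule integral_radial_primitive_swap[OF prob_space_imp_sigma_finite[OF \<nu>(1)] \<nu>(2)])
    have "ennreal (\<bar>sym_slope n x s\<bar> * indicator {0<..} s) * (\<integral>\<^sup>+h. ennreal (1 * indicator {h. s \<le> \<bar>h\<bar>} h) \<partial>\<nu>)
        \<le> ennreal (slope_majorant n x s)" for s
    proof -
      have "(\<integral>\<^sup>+h. ennreal (1 * indicator {h. s \<le> \<bar>h\<bar>} h) \<partial>\<nu>) = emeasure \<nu> {h. s \<le> \<bar>h\<bar>}"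
        by (simp add: nn_integral_indicator[symmetric] \<nu>(2) ennreal_indicator del: nn_integral_indicator)
      also have "\<dots> \<le> 1" by (rule emeasure_le_1)
      finally have "ennreal (\<bar>sym_slope n x s\<bar> * indicator {0<..} s) * (\<integral>\<^sup>+h. ennreal (1 * indicator {h. s \<le> \<bar>h\<bar>} h) \<partial>\<nu>)
          \<le> ennreal (\<bar>sym_slope n x s\<bar> * indicator {0<..} s) * 1"
        by (intro mult_left_mono) simp_all
      also have "\<dots> \<le> ennreal (slope_majorant n x s)"
        using abs_sym_slope_le_majorant[of n x s] slope_majorant_nonneg[of n x s]
        by (auto simp: indicator_def intro!: ennreal_leI)
      finally show ?thesis .
    qed
    then have "(\<integral>\<^sup>+s. ennreal (\<bar>sym_slope n x s\<bar> * indicator {0<..} s) *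
        (\<integral>\<^sup>+h. ennreal (1 * indicator {h. s \<le> \<bar>h\<bar>} h) \<partial>\<nu>) \<partial>lborel)
        \<le> (\<integral>\<^sup>+s. ennreal (slope_majorant n x s) \<partial>lborel)"
      by (rule nn_integral_mono)
    also have "\<dots> = ennreal 60"
      by (intro nn_integral_eq_if_has_bochner_integral has_bochner_integral_slope_majorant
          slope_majorant_nonneg)
    finally show "(\<integral>\<^sup>+s. ennreal (\<bar>sym_slope n x s\<bar> * indicator {0<..} s) *
        (\<integral>\<^sup>+h. ennreal (1 * indicator {h. s \<le> \<bar>h\<bar>} h) \<partial>\<nu>) \<partial>lborel) < \<infinity>"
      by (simp add: le_less_trans)
  qed simp_all
  also have "\<dots> = (\<integral>s. sym_slope n x s * indicator {0<..} s * measure \<nu> {h. s \<le> \<bar>h\<bar>} \<partial>lborel)"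
    using sets_eq_imp_space_eq[OF \<nu>(2)] by simp
  finally show ?thesis .
qed

text \<open>Pointwise comparison of the two slope integrands: for \<open>s c \<ge> U\<close> the tail hypothesis applies,
  while for \<open>s < U / c\<close> both tails are crude but the slope is \<open>O(s)\<close>.\<close>
lemma abs_slope_tail_error_le:
  fixes T :: "real \<Rightarrow> real"
  assumes \<alpha>: "0 < \<alpha>" and c: "0 < c" and \<sigma>: "0 \<le> \<sigma>" "\<sigma> \<le> S" and \<delta>: "0 \<le> \<delta>"
    and T: "\<And>s. 0 \<le> T s \<and> T s \<le> 1"
    and tail: "\<And>s. U \<le> s * c \<Longrightarrow> \<bar>(s * c) powr \<alpha> * T s - 2 * \<sigma> / \<alpha>\<bar> \<le> \<delta>"
  shows "\<bar>sym_slope n x s * indicator {0<..} s * (c powr \<alpha> * T s - \<sigma> * (2 * s powr (- \<alpha>) / \<alpha>))\<bar>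
    \<le> \<delta> * slope_bound \<alpha> n x s + (U powr \<alpha> + 2 * S / \<alpha>) * 120 * (indicator {-(U/c)..U/c} s * \<bar>s\<bar> powr (1 - \<alpha>))"
    (is "?lhs \<le> ?rhs")
proof (cases "0 < s")
  case False
  then show ?thesis using \<delta> \<sigma> \<alpha> slope_bound_nonneg by simp
next
  case True
  define e where "e = (s * c) powr \<alpha> * T s - 2 * \<sigma> / \<alpha>"
  have "s powr (- \<alpha>) * s powr \<alpha> = 1"
    using True by (simp add: powr_add[symmetric])
  then have "c powr \<alpha> * T s - \<sigma> * (2 * s powr (- \<alpha>) / \<alpha>) = s powr (- \<alpha>) * e"
    unfolding e_def powr_mult by algebra
  then have lhs: "?lhs = (\<bar>sym_slope n x s\<bar> * s powr (- \<alpha>)) * \<bar>e\<bar>"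
    using True by (simp add: abs_mult)
  have rhs: "0 \<le> \<delta> * slope_bound \<alpha> n x s" "0 \<le> (U powr \<alpha> + 2 * S / \<alpha>) * 120 * (indicator {-(U/c)..U/c} s * \<bar>s\<bar> powr (1 - \<alpha>))"
    using \<delta> \<sigma> \<alpha> slope_bound_nonneg by simp_all
  show ?thesis
  proof (cases "U \<le> s * c")
    case far: True
    have "(\<bar>sym_slope n x s\<bar> * s powr (- \<alpha>)) * \<bar>e\<bar> \<le> slope_bound \<alpha> n x s * \<delta>"
      using tail[OF far] abs_sym_slope_powr_le_slope_bound[OF True] \<alpha> slope_bound_nonneg
      unfolding e_def by (intro mult_mono) auto
    then show ?thesis using lhs rhs by (simp add: mult.commute)
  next
    case near: False
    have "(s * c) powr \<alpha> \<le> U powr \<alpha>"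
      using near True c \<alpha> by (intro powr_mono2) auto
    then have "(s * c) powr \<alpha> * T s \<le> U powr \<alpha>"
      using T[of s] by (metis mult_right_le_one_le order.trans powr_ge_zero)
    moreover have "2 * \<sigma> / \<alpha> \<le> 2 * S / \<alpha>"
      using \<sigma> \<alpha> by (simp add: divide_right_mono)
    moreover have "0 \<le> (s * c) powr \<alpha> * T s" "0 \<le> 2 * \<sigma> / \<alpha>"
      using T[of s] \<sigma> \<alpha> by simp_all
    ultimately have e_le: "\<bar>e\<bar> \<le> U powr \<alpha> + 2 * S / \<alpha>"
      unfolding e_def abs_le_iff by auto
    have "s \<le> U / c" using near c by (simp add: pos_le_divide_eq)
    then have "indicator {-(U/c)..U/c} s = (1::real)"
      using True by (simp add: indicator_def)
    moreover have "\<bar>sym_slope n x s\<bar> * s powr (- \<alpha>) \<le> 120 * s * s powr (- \<alpha>)"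
      using abs_sym_slope_le[of n x s] True by (intro mult_right_mono) auto
    moreover have "120 * s * s powr (- \<alpha>) = 120 * s powr (1 - \<alpha>)"
      using True by (simp add: powr_diff powr_minus_divide)
    ultimately have "\<bar>sym_slope n x s\<bar> * s powr (- \<alpha>) \<le> 120 * (indicator {-(U/c)..U/c} s * \<bar>s\<bar> powr (1 - \<alpha>))"
      using True by simp
    from mult_mono[OF this e_le _ abs_ge_zero] have "(\<bar>sym_slope n x s\<bar> * s powr (- \<alpha>)) * \<bar>e\<bar>
        \<le> 120 * (indicator {-(U/c)..U/c} s * \<bar>s\<bar> powr (1 - \<alpha>)) * (U powr \<alpha> + 2 * S / \<alpha>)"
      by simp
    also have "\<dots> = (U powr \<alpha> + 2 * S / \<alpha>) * 120 * (indicator {-(U/c)..U/c} s * \<bar>s\<bar> powr (1 - \<alpha>))"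
      by (simp only: mult_ac)
    finally have "(\<bar>sym_slope n x s\<bar> * s powr (- \<alpha>)) * \<bar>e\<bar>
        \<le> (U powr \<alpha> + 2 * S / \<alpha>) * 120 * (indicator {-(U/c)..U/c} s * \<bar>s\<bar> powr (1 - \<alpha>))" .
    then show ?thesis
      using lhs rhs by linarith
  qed
qed

lemma distr_scaled_symmetric:
  fixes X :: "'a \<Rightarrow> real"
  assumes [measurable]: "X \<in> borel_measurable M"
    and sym: "distr M borel X = distr M borel (\<lambda>\<omega>. - X \<omega>)"
  shows "distr (distr M borel (\<lambda>\<omega>. X \<omega> / c)) borel uminus = distr M borel (\<lambda>\<omega>. X \<omega> / c)"
proof -
  have "distr (distr M borel (\<lambda>\<omega>. X \<omega> / c)) borel uminus = distr M borel (uminus \<circ> (\<lambda>\<omega>. X \<omega> / c))"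
    by (rule distr_distr) measurable
  also have "uminus \<circ> (\<lambda>\<omega>. X \<omega> / c) = (\<lambda>y. y / c) \<circ> (\<lambda>\<omega>. - X \<omega>)"
    by (auto simp: fun_eq_iff)
  also have "distr M borel ((\<lambda>y. y / c) \<circ> (\<lambda>\<omega>. - X \<omega>)) = distr (distr M borel (\<lambda>\<omega>. - X \<omega>)) borel (\<lambda>y. y / c)"
    by (rule distr_distr[symmetric]) measurable
  also have "\<dots> = distr M borel ((\<lambda>y. y / c) \<circ> X)"
    unfolding sym[symmetric] by (rule distr_distr) measurable
  finally show ?thesis by (simp add: comp_def)
qed

lemma measure_distr_scaled_abs_ge:
  fixes X :: "'a \<Rightarrow> real"
  assumes [measurable]: "X \<in> borel_measurable M" and c: "0 < c"
  shows "measure (distr M borel (\<lambda>\<omega>. X \<omega> / c)) {h. s \<le> \<bar>h\<bar>} = measure M {\<omega>\<in>space M. s * c \<le> \<bar>X \<omega>\<bar>}"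
proof -
  have "measure (distr M borel (\<lambda>\<omega>. X \<omega> / c)) {h. s \<le> \<bar>h\<bar>} = measure M ((\<lambda>\<omega>. X \<omega> / c) -` {h. s \<le> \<bar>h\<bar>} \<inter> space M)"
    by (rule measure_distr) measurable
  also have "(\<lambda>\<omega>. X \<omega> / c) -` {h. s \<le> \<bar>h\<bar>} \<inter> space M = {\<omega>\<in>space M. s * c \<le> \<bar>X \<omega>\<bar>}"
    using c by (auto simp: pos_le_divide_eq)
  finally show ?thesis .
qed

lemma abs_scaled_increment_error_le:
  fixes M :: "'a measure" and X :: "'a \<Rightarrow> real"
  assumes n: "1 \<le> n" and \<alpha>: "0 < \<alpha>" "\<alpha> < 2"
    and M: "prob_space M" and [measurable]: "X \<in> borel_measurable M"
    and sym: "distr M borel X = distr M borel (\<lambda>\<omega>. - X \<omega>)"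
    and c: "0 < c" and U: "0 < U" and \<sigma>: "0 \<le> \<sigma>" "\<sigma> \<le> S"
    and tail: "\<And>u. U \<le> u \<Longrightarrow> \<bar>u powr \<alpha> * measure M {\<omega>\<in>space M. u \<le> \<bar>X \<omega>\<bar>} - 2 * \<sigma> / \<alpha>\<bar> \<le> \<delta>"
  shows "\<bar>c powr \<alpha> * (\<integral>h. fn n (x + h) - fn n x \<partial>distr M borel (\<lambda>\<omega>. X \<omega> / c)) - \<sigma> * frac_lap \<alpha> (fn n) x\<bar>
    \<le> \<delta> * slope_bound_total \<alpha> + (U powr \<alpha> + 2 * S / \<alpha>) * 120 * (2 * (U / c) powr (2 - \<alpha>) / (2 - \<alpha>))"
proof -
  define \<nu> where "\<nu> = distr M borel (\<lambda>\<omega>. X \<omega> / c)"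
  define T where "T s = measure \<nu> {h. s \<le> \<bar>h\<bar>}" for s
  define E where "E s = sym_slope n x s * indicator {0<..} s * (c powr \<alpha> * T s - \<sigma> * (2 * s powr (- \<alpha>) / \<alpha>))" for s
  define R where "R s = \<delta> * slope_bound \<alpha> n x s
      + (U powr \<alpha> + 2 * S / \<alpha>) * 120 * (indicator {-(U/c)..U/c} s * \<bar>s\<bar> powr (1 - \<alpha>))" for s
  have \<nu>: "prob_space \<nu>" "sets \<nu> = sets borel"
    unfolding \<nu>_def using M by (simp_all add: prob_space.prob_space_distr)
  have sym_\<nu>: "distr \<nu> borel uminus = \<nu>"
    unfolding \<nu>_def by (intro distr_scaled_symmetric sym) measurable
  have [measurable]: "T \<in> borel_measurable borel"
    unfolding T_def[abs_def] using \<nu> by (intro borel_measurable_measure_abs_ge) (auto simp: prob_space_def)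
  have T: "0 \<le> T s \<and> T s \<le> 1" for s
    using prob_space.prob_le_1[OF \<nu>(1)] by (simp add: T_def)
  have "0 \<le> \<delta>"
    using tail[of U] by simp
  have "\<bar>(s * c) powr \<alpha> * T s - 2 * \<sigma> / \<alpha>\<bar> \<le> \<delta>" if "U \<le> s * c" for s
    using tail[OF that] measure_distr_scaled_abs_ge[of X M c s] c by (simp add: T_def \<nu>_def)
  then have pointwise: "\<bar>E s\<bar> \<le> R s" for s
    unfolding E_def R_def by (rule abs_slope_tail_error_le[OF \<alpha>(1) c \<sigma> \<open>0 \<le> \<delta>\<close> T])
  have incr: "c powr \<alpha> * (\<integral>h. fn n (x + h) - fn n x \<partial>\<nu>)
      = (\<integral>s. sym_slope n x s * indicator {0<..} s * (c powr \<alpha> * T s) \<partial>lborel)"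
    unfolding integral_fn_incr_symmetric[OF n \<nu> sym_\<nu>]
    by (simp add: T_def mult_ac)
  have int_incr: "integrable lborel (\<lambda>s. sym_slope n x s * indicator {0<..} s * (c powr \<alpha> * T s))"
  proof (rule Bochner_Integration.integrable_bound)
    show "integrable lborel (\<lambda>s. c powr \<alpha> * slope_bound \<alpha> n x s)"
      by (rule integrable.intros[OF has_bochner_integral_mult_right[OF has_bochner_integral_slope_bound[OF \<alpha>(2)]]])
    show "AE s in lborel. norm (sym_slope n x s * indicator {0<..} s * (c powr \<alpha> * T s))
        \<le> norm (c powr \<alpha> * slope_bound \<alpha> n x s)"
    proof (intro AE_I2)
      fix s
      have "\<bar>sym_slope n x s\<bar> * indicator {0<..} s * (c powr \<alpha> * T s) \<le> slope_bound \<alpha> n x s * (c powr \<alpha> * 1)"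
        using abs_sym_slope_le_slope_bound[of n x s \<alpha>] slope_bound_nonneg T[of s]
        by (intro mult_mono) (auto simp: indicator_def)
      then show "norm (sym_slope n x s * indicator {0<..} s * (c powr \<alpha> * T s)) \<le> norm (c powr \<alpha> * slope_bound \<alpha> n x s)"
        using T[of s] slope_bound_nonneg by (simp add: abs_mult mult.commute)
    qed
  qed measurable
  have "c powr \<alpha> * (\<integral>h. fn n (x + h) - fn n x \<partial>\<nu>) - \<sigma> * frac_lap \<alpha> (fn n) x = integral\<^sup>L lborel E"
    unfolding incr frac_lap_fn_eq_integral_sym_slope[OF n \<alpha>] E_def
    using int_incr integrable_mult_right[OF integrable_sym_slope_tail[OF \<alpha>], of \<sigma>]
    by (simp add: algebra_simps)
  moreover have R: "has_bochner_integral lborel R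
      (\<delta> * slope_bound_total \<alpha> + (U powr \<alpha> + 2 * S / \<alpha>) * 120 * (2 * (U / c) powr (1 - \<alpha> + 1) / (1 - \<alpha> + 1)))"
    unfolding R_def[abs_def]
    by (intro has_bochner_integral_add has_bochner_integral_mult_right has_bochner_integral_slope_bound
        has_bochner_integral_abs_powr_Icc) (use U c \<alpha> in auto)
  moreover have "\<bar>integral\<^sup>L lborel E\<bar> \<le> integral\<^sup>L lborel R"
  proof (rule integral_abs_bound_integral)
    show "integrable lborel E"
      unfolding E_def using Bochner_Integration.integrable_diff[OF int_incr
        integrable_mult_right[OF integrable_sym_slope_tail[OF \<alpha>], of \<sigma>]]
      by (simp add: algebra_simps)
    show "integrable lborel R"
      using R by (rule integrable.intros)
  qed (rule pointwise)
  ultimately show ?thesis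
    by (simp add: \<nu>_def has_bochner_integral_integral_eq)
qed

lemma uniform_convergence_scaled_increment:
  fixes M :: "'a measure" and X :: "real \<Rightarrow> 'a \<Rightarrow> real" and \<sigma> :: "real \<Rightarrow> real"
  assumes \<alpha>: "0 < \<alpha>" "\<alpha> < 2" and M: "prob_space M" and \<eta>: "0 < \<eta>"
    and X: "\<And>x. X x \<in> borel_measurable M"
    and sym: "\<And>x. distr M borel (X x) = distr M borel (\<lambda>\<omega>. - X x \<omega>)"
    and \<sigma>: "\<And>x. 0 \<le> \<sigma> x" "bounded (range \<sigma>)"
    and tail: "\<And>\<epsilon>. 0 < \<epsilon> \<Longrightarrow> \<exists>U. \<forall>u\<ge>U. \<forall>x.
      \<bar>u powr \<alpha> * measure M {\<omega>\<in>space M. \<bar>X x \<omega>\<bar> \<ge> u} - 2 * \<sigma> x / \<alpha>\<bar> \<le> \<epsilon>"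
    and \<epsilon>: "0 < \<epsilon>"
  shows "\<exists>K0. \<forall>K\<ge>K0. \<forall>n\<ge>1. \<forall>x.
    \<bar>K powr \<eta> * (LINT h|distr M borel (\<lambda>\<omega>. X x \<omega> / K powr (\<eta> / \<alpha>)). fn n (x + h) - fn n x)
      - \<sigma> x * frac_lap \<alpha> (fn n) x\<bar> \<le> \<epsilon>"
proof -
  obtain S where S: "\<And>x. \<sigma> x \<le> S"
    using \<sigma>(2) unfolding bounded_real by (meson abs_le_D1 rangeI)
  define \<delta> where "\<delta> = \<epsilon> / (2 * slope_bound_total \<alpha>)"
  have "0 < slope_bound_total \<alpha>"
    using \<alpha> by (simp add: slope_bound_total_def add_pos_pos)
  then have \<delta>: "0 < \<delta>" "\<delta> * slope_bound_total \<alpha> = \<epsilon> / 2"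
    using \<epsilon> by (simp_all add: \<delta>_def)
  obtain U0 where U0: "\<And>u x. U0 \<le> u \<Longrightarrow> \<bar>u powr \<alpha> * measure M {\<omega>\<in>space M. u \<le> \<bar>X x \<omega>\<bar>} - 2 * \<sigma> x / \<alpha>\<bar> \<le> \<delta>"
    using tail[OF \<delta>(1)] by blast
  define U where "U = max U0 1"
  define p where "p = \<eta> / \<alpha> * (2 - \<alpha>)"
  define C where "C = (U powr \<alpha> + 2 * S / \<alpha>) * 120 * (2 * U powr (2 - \<alpha>) / (2 - \<alpha>))"
  have "((\<lambda>K. C * K powr (- p)) \<longlongrightarrow> C * 0) at_top"
    using \<eta> \<alpha> by (intro tendsto_mult tendsto_const tendsto_neg_powr filterlim_ident) (simp add: p_def)
  moreover have "C * 0 < \<epsilon> / 2"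
    using \<epsilon> by simp
  ultimately have "eventually (\<lambda>K. C * K powr (- p) < \<epsilon> / 2) at_top"
    by (rule order_tendstoD(2))
  then have "eventually (\<lambda>K. 0 < K \<and> C * K powr (- p) < \<epsilon> / 2) at_top"
    by (intro eventually_conj eventually_gt_at_top)
  then obtain K0 where K0: "\<And>K. K0 \<le> K \<Longrightarrow> 0 < K \<and> C * K powr (- p) < \<epsilon> / 2"
    unfolding eventually_at_top_linorder by blast
  have U: "0 < U" "\<And>u x. U \<le> u \<Longrightarrow>
      \<bar>u powr \<alpha> * measure M {\<omega>\<in>space M. u \<le> \<bar>X x \<omega>\<bar>} - 2 * \<sigma> x / \<alpha>\<bar> \<le> \<delta>"
    using U0 by (auto simp: U_def)
  have "\<bar>K powr \<eta> * (LINT h|distr M borel (\<lambda>\<omega>. X x \<omega> / K powr (\<eta> / \<alpha>)). fn n (x + h) - fn n x)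
      - \<sigma> x * frac_lap \<alpha> (fn n) x\<bar> \<le> \<epsilon>" if K: "K0 \<le> K" and n: "1 \<le> n" for K n x
  proof -
    define c where "c = K powr (\<eta> / \<alpha>)"
    have K_pos: "0 < K" and small: "C * K powr (- p) < \<epsilon> / 2"
      using K0[OF K] by auto
    then have c: "0 < c" by (simp add: c_def)
    have K_c: "K powr \<eta> = c powr \<alpha>"
      using \<alpha> by (simp add: c_def powr_powr)
    have "(U / c) powr (2 - \<alpha>) = U powr (2 - \<alpha>) / c powr (2 - \<alpha>)"
      using U(1) c by (simp add: powr_divide)
    also have "c powr (2 - \<alpha>) = K powr p"
      by (simp add: c_def powr_powr p_def)
    finally have "(U / c) powr (2 - \<alpha>) = U powr (2 - \<alpha>) * K powr (- p)"
      by (simp add: powr_minus_divide)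
    then have "(U powr \<alpha> + 2 * S / \<alpha>) * 120 * (2 * (U / c) powr (2 - \<alpha>) / (2 - \<alpha>)) = C * K powr (- p)"
      by (simp add: C_def)
    then have "\<bar>c powr \<alpha> * (LINT h|distr M borel (\<lambda>\<omega>. X x \<omega> / c). fn n (x + h) - fn n x)
        - \<sigma> x * frac_lap \<alpha> (fn n) x\<bar> \<le> \<delta> * slope_bound_total \<alpha> + C * K powr (- p)"
      using abs_scaled_increment_error_le[OF n \<alpha> M X sym c U(1) \<sigma>(1) S U(2)] by simp
    then show ?thesis
      using small \<delta>(2) by (simp add: K_c c_def[symmetric])
  qed
  then show ?thesis by blast
qed

theorem lemma4p2:
  fixes \<alpha> :: real
  assumes "0 < \<alpha>" and "\<alpha> < 2"
  shows "(\<forall>n\<ge>1. C2 (fn n) \<and> (\<forall>x. fn n (- x) = fn n x) \<and> mono_on {0..} (fn n)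
            \<and> (\<forall>x. \<bar>x\<bar> \<le> real n - 1 \<longrightarrow> fn n x = 0)
            \<and> (\<forall>x. \<bar>x\<bar> \<ge> real n \<longrightarrow> fn n x = 1))
       \<and> (\<forall>x. fn 0 x = 1)
       \<and> (\<exists>C. \<forall>n\<ge>1. \<forall>x. \<bar>frac_lap \<alpha> (fn n) x\<bar> \<le> C)
       \<and> (\<forall>n\<ge>1. \<forall>x. \<bar>x\<bar> < real n - 1 \<longrightarrow>
            \<bar>frac_lap \<alpha> (fn n) x\<bar> \<le> 2 / (\<alpha> * (real n - 1 - \<bar>x\<bar>) powr \<alpha>))
       \<and> (\<forall>(M :: 'a measure) (X :: real \<Rightarrow> 'a \<Rightarrow> real) (\<sigma> :: real \<Rightarrow> real) (\<eta> :: real).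
            prob_space M \<and> \<eta> > 0
            \<and> (\<forall>x. X x \<in> borel_measurable M)
            \<and> (\<forall>x. distr M borel (X x) = distr M borel (\<lambda>\<omega>. - X x \<omega>))
            \<and> (\<forall>x. \<sigma> x \<ge> 0) \<and> bounded (range \<sigma>)
            \<and> (\<forall>\<epsilon>>0. \<exists>U. \<forall>u\<ge>U. \<forall>x.
                 \<bar>u powr \<alpha> * measure M {\<omega>\<in>space M. \<bar>X x \<omega>\<bar> \<ge> u} - 2 * \<sigma> x / \<alpha>\<bar> \<le> \<epsilon>)
          \<longrightarrow> (\<forall>\<epsilon>>0. \<exists>K0. \<forall>K\<ge>K0. \<forall>n\<ge>1. \<forall>x.
                 \<bar>K powr \<eta> * (LINT h|distr M borel (\<lambda>\<omega>. X x \<omega> / K powr (\<eta> / \<alpha>)).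
                      fn n (x + h) - fn n x)
                  - \<sigma> x * frac_lap \<alpha> (fn n) x\<bar> \<le> \<epsilon>))"
proof (intro conjI)
  show "\<forall>n\<ge>1. C2 (fn n) \<and> (\<forall>x. fn n (- x) = fn n x) \<and> mono_on {0..} (fn n)
      \<and> (\<forall>x. \<bar>x\<bar> \<le> real n - 1 \<longrightarrow> fn n x = 0) \<and> (\<forall>x. \<bar>x\<bar> \<ge> real n \<longrightarrow> fn n x = 1)"
    using C2_fn fn_even mono_on_fn fn_eq_0 fn_eq_1 by blast
  show "\<forall>x. fn 0 x = 1"
    by (simp add: fn_0)
  show "\<exists>C. \<forall>n\<ge>1. \<forall>x. \<bar>frac_lap \<alpha> (fn n) x\<bar> \<le> C"
    using abs_frac_lap_fn_le[OF _ assms] by blast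
  show "\<forall>n\<ge>1. \<forall>x. \<bar>x\<bar> < real n - 1 \<longrightarrow>
      \<bar>frac_lap \<alpha> (fn n) x\<bar> \<le> 2 / (\<alpha> * (real n - 1 - \<bar>x\<bar>) powr \<alpha>)"
    using abs_frac_lap_fn_le_interior[OF _ assms] by blast
qed (use uniform_convergence_scaled_increment[OF assms] in blast)

end
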